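(* Suppose $\eta_jL<1$. For the biased batched SVRG (Algorithm 3), $$(1-\lambda)\big(1-(1-\lambda)L\eta_j\big)\eta_jB_j\,\mathbb{E}\|\nabla f(\tilde x_j)\|^2+\eta_jB_j\,\mathbb{E}\langle e_j,\nabla f(\tilde x_j)\rangle\le b_j\,\mathbb{E}\big(f(\tilde x_{j-1})-f(\tilde x_j)\big)+\frac{(1-\lambda)^2\eta_j^2B_jL^3}{2b_j}\mathbb{E}\|\tilde x_j-\tilde x_{j-1}\|^2+L\eta_j^2B_j\,\mathbb{E}\|e_j\|^2.$$
   Context: Setting: $f(x)=\frac1n\sum_{i=1}^n f_i(x)$ with each $f_i:\mathbb{R}^d\to\mathbb{R}$ differentiable and $L$-smooth: $\|\nabla f_i(x)-\nabla f_i(y)\|\le L\|x-y\|$. For $\mathcal I\subset\{1,\dots,n\}$, $\nabla f_{\mathcal I}(x)=\frac1{|\mathcal I|}\sum_{i\in\mathcal I}\nabla f_i(x)$. $N\sim\mathrm{Geom}(\gamma')$ means $P(N=k)=(1-\gamma')\gamma'^k$, $k\ge0$. Epoch $j$ of the batched SVRG scheme: $\mathcal I_j$ uniformly random of size $B_j$, $g_j=\nabla f_{\mathcal I_j}(\tilde x_{j-1})$, $x^{(j)}_0=\tilde x_{j-1}$; $N_j\sim\mathrm{Geom}(B_j/(B_j+b_j))$ drawn independently (mean $B_j/b_j$); for $k=0,\dots,N_j-1$, $\tilde{\mathcal I}_k$ uniformly random of size $b_j$ and $x^{(j)}_{k+1}=x^{(j)}_k-\eta_jv^{(j)}_k$;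 $\tilde x_j=x^{(j)}_{N_j}$. Algorithm 3 (biased, $0<\lambda<1$): $v^{(j)}_k=(1-\lambda)(\nabla f_{\tilde{\mathcal I}_k}(x^{(j)}_k)-\nabla f_{\tilde{\mathcal I}_k}(x^{(j)}_0))+\lambda g_j$, and $e_j=\lambda\nabla f_{\mathcal I_j}(\tilde x_{j-1})-(1-\lambda)\nabla f(\tilde x_{j-1})$. $\mathbb{E}$ is expectation over all randomness. *)

theory Defs
  imports "HOL-Analysis.Analysis" "HOL-Probability.Probability"
begin

definition subsets_of_size :: "nat \<Rightarrow> nat \<Rightarrow> nat set set" where
  "subsets_of_size n m = {S. S \<subseteq> {1..n} \<and> card S = m}"

text \<open>Mini-batch gradient: G i x is the gradient of f_i at x.\<close>
definition gradB :: "(nat \<Rightarrow> 'a \<Rightarrow> 'a::real_vector) \<Rightarrow> nat set \<Rightarrow> 'a \<Rightarrow> 'a" where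
  "gradB G I x = (1 / real (card I)) *\<^sub>R (\<Sum>i\<in>I. G i x)"

definition svrg_step :: "nat \<Rightarrow> (nat \<Rightarrow> 'a \<Rightarrow> 'a::real_vector) \<Rightarrow> real \<Rightarrow> real \<Rightarrow> nat
    \<Rightarrow> 'a \<Rightarrow> 'a \<Rightarrow> 'a \<Rightarrow> 'a pmf" where
  "svrg_step n G lam eta b g x0 x =
     map_pmf (\<lambda>S. x - eta *\<^sub>R ((1 - lam) *\<^sub>R (gradB G S x - gradB G S x0) + lam *\<^sub>R g))
       (pmf_of_set (subsets_of_size n b))"

fun svrg_inner :: "nat \<Rightarrow> (nat \<Rightarrow> 'a \<Rightarrow> 'a::real_vector) \<Rightarrow> real \<Rightarrow> real \<Rightarrow> nat
    \<Rightarrow> 'a \<Rightarrow> 'a \<Rightarrow> nat \<Rightarrow> 'a \<Rightarrow> 'a pmf" where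
  "svrg_inner n G lam eta b g x0 0 x = return_pmf x"
| "svrg_inner n G lam eta b g x0 (Suc k) x =
     bind_pmf (svrg_step n G lam eta b g x0 x) (svrg_inner n G lam eta b g x0 k)"

text \<open>N_j ~ Geom(B/(B+b)), i.e. P(N=k) = (b/(B+b)) (B/(B+b))^k,
  which is geometric_pmf (b/(B+b)) in the library convention.\<close>
definition svrg_epoch :: "nat \<Rightarrow> (nat \<Rightarrow> 'a \<Rightarrow> 'a::real_vector) \<Rightarrow> real \<Rightarrow> real \<Rightarrow> nat \<Rightarrow> nat
    \<Rightarrow> 'a \<Rightarrow> (nat set \<times> 'a) pmf" where
  "svrg_epoch n G lam eta B b x0 =
     bind_pmf (pmf_of_set (subsets_of_size n B)) (\<lambda>I.
       bind_pmf (geometric_pmf (real b / (real B + real b))) (\<lambda>N.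
         map_pmf (\<lambda>x. (I, x)) (svrg_inner n G lam eta b (gradB G I x0) x0 N x0)))"

text \<open>Full joint law of (tilde x_{j-1}, I_j, tilde x_j) when tilde x_{j-1} has law P0.\<close>
definition svrg_joint :: "nat \<Rightarrow> (nat \<Rightarrow> 'a \<Rightarrow> 'a::real_vector) \<Rightarrow> real \<Rightarrow> real \<Rightarrow> nat \<Rightarrow> nat
    \<Rightarrow> 'a pmf \<Rightarrow> ('a \<times> nat set \<times> 'a) pmf" where
  "svrg_joint n G lam eta B b P0 =
     bind_pmf P0 (\<lambda>x0. map_pmf (\<lambda>(I, x). (x0, I, x)) (svrg_epoch n G lam eta B b x0))"

end

theory Submission
  imports Defs
begin

(*
  An inner step moves x to x - eta v with v = (1 - lambda) (grad f_S x - grad f_S x\<^sub>0) + lambda g.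
  Over the uniformly random minibatch S, v has mean (1 - lambda) grad f x + e, and sampling
  without replacement bounds its variance by (1 - lambda)^2 L^2 |x - x\<^sub>0|^2 / b.  The quadratic
  upper bound of the L-smooth f therefore gives E f(x_(k+1)) <= E f(x_k) - E h(x_k) for an
  explicit per-step gain h.  The epoch length N is geometric, P(N = k) = p (1 - p)^k with
  p = b / (B + b), and summation by parts against these weights turns the telescoping decrease
  into B E h(x_N) <= b (f x\<^sub>0 - E f(x_N)); integrating over x\<^sub>0 and the batch I gives the claim.
*)

section \<open>Integrals over a pmf kernel\<close>

lemma integral_bind_pmf_nonneg_integrand:
  fixes h :: "'b \<Rightarrow> real"
  assumes int: "integrable (bind_pmf M K) h" and nonneg: "\<And>y. 0 \<le> h y"
  shows "\<forall>x\<in>set_pmf M. integrable (K x) h"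
    and "integrable M (\<lambda>x. \<integral>y. h y \<partial>K x)"
    and "(\<integral>y. h y \<partial>bind_pmf M K) = (\<integral>x. \<integral>y. h y \<partial>K x \<partial>M)"
proof -
  have finite: "(\<integral>\<^sup>+y. ennreal (h y) \<partial>bind_pmf M K) < \<infinity>"
    using int nonneg by (auto simp: integrable_iff_bounded)
  then have "AE x in M. (\<integral>\<^sup>+y. ennreal (h y) \<partial>K x) \<noteq> \<infinity>"
    by (intro nn_integral_PInf_AE) auto
  then have "\<forall>x\<in>set_pmf M. (\<integral>\<^sup>+y. ennreal (h y) \<partial>K x) < \<infinity>"
    by (simp add: AE_measure_pmf_iff top.not_eq_extremum)
  then show kernel: "\<forall>x\<in>set_pmf M. integrable (K x) h"
    using nonneg by (auto intro!: integrableI_nonneg)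
  have inner_nonneg: "\<And>x. 0 \<le> (\<integral>y. h y \<partial>K x)"
    using nonneg by (simp add: integral_nonneg)
  have "(\<integral>\<^sup>+x. ennreal (\<integral>y. h y \<partial>K x) \<partial>M) = (\<integral>\<^sup>+y. ennreal (h y) \<partial>bind_pmf M K)"
    using kernel nonneg
    by (auto intro!: nn_integral_cong_AE simp: AE_measure_pmf_iff nn_integral_eq_integral)
  then show "integrable M (\<lambda>x. \<integral>y. h y \<partial>K x)"
    and "(\<integral>y. h y \<partial>bind_pmf M K) = (\<integral>x. \<integral>y. h y \<partial>K x \<partial>M)"
    using finite inner_nonneg nonneg by (auto intro!: integrableI_nonneg simp: integral_eq_nn_integral)
qed

lemma integral_bind_pmf_integrable:
  fixes h :: "'b \<Rightarrow> real"
  assumes int: "integrable (bind_pmf M K) h"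
  shows integrable_bind_pmf_kernel: "\<forall>x\<in>set_pmf M. integrable (K x) h"
    and "integrable M (\<lambda>x. \<integral>y. h y \<partial>K x)"
    and "(\<integral>y. h y \<partial>bind_pmf M K) = (\<integral>x. \<integral>y. h y \<partial>K x \<partial>M)"
proof -
  define hp where "hp y = max (h y) 0" for y
  define hm where "hm y = max (- h y) 0" for y
  have h_eq: "h = (\<lambda>y. hp y - hm y)" by (auto simp: hp_def hm_def)
  have int_p: "integrable (bind_pmf M K) hp" and int_m: "integrable (bind_pmf M K) hm"
    using int unfolding hp_def hm_def by auto
  have "\<And>y. 0 \<le> hp y" and "\<And>y. 0 \<le> hm y" by (auto simp: hp_def hm_def)
  note p = integral_bind_pmf_nonneg_integrand[OF int_p this(1)]
    and m = integral_bind_pmf_nonneg_integrand[OF int_m this(2)]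
  show kernel: "\<forall>x\<in>set_pmf M. integrable (K x) h"
    using p(1) m(1) unfolding h_eq by blast
  have inner_eq: "AE x in M. (\<integral>y. hp y \<partial>K x) - (\<integral>y. hm y \<partial>K x) = (\<integral>y. h y \<partial>K x)"
    using p(1) m(1) unfolding h_eq by (simp add: AE_measure_pmf_iff)
  show "integrable M (\<lambda>x. \<integral>y. h y \<partial>K x)"
    using integrable_cong_AE_imp[OF Bochner_Integration.integrable_diff[OF p(2) m(2)] _ inner_eq]
    by simp
  have "(\<integral>y. h y \<partial>bind_pmf M K) = (\<integral>y. hp y \<partial>bind_pmf M K) - (\<integral>y. hm y \<partial>bind_pmf M K)"
    using int_p int_m by (subst h_eq) simp
  also have "\<dots> = (\<integral>x. (\<integral>y. hp y \<partial>K x) - (\<integral>y. hm y \<partial>K x) \<partial>M)"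
    using p m by simp
  also have "\<dots> = (\<integral>x. \<integral>y. h y \<partial>K x \<partial>M)"
    using inner_eq by (intro integral_cong_AE) auto
  finally show "(\<integral>y. h y \<partial>bind_pmf M K) = (\<integral>x. \<integral>y. h y \<partial>K x \<partial>M)" .
qed

lemma integral_bind_pmf_nonpos:
  fixes h :: "'b \<Rightarrow> real"
  assumes "integrable (bind_pmf M K) h" and "\<And>x. x \<in> set_pmf M \<Longrightarrow> (\<integral>y. h y \<partial>K x) \<le> 0"
  shows "(\<integral>y. h y \<partial>bind_pmf M K) \<le> 0"
proof -
  have "(\<integral>x. \<integral>y. h y \<partial>K x \<partial>M) \<le> (\<integral>x. 0 \<partial>M)"
    using assms by (intro integral_mono_AE integral_bind_pmf_integrable) (auto simp: AE_measure_pmf_iff)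
  then show ?thesis
    using integral_bind_pmf_integrable(3)[OF assms(1)] by simp
qed

section \<open>Stopping at a geometric time\<close>

lemma geometric_pmf_sums:
  fixes a :: "nat \<Rightarrow> real"
  assumes "integrable (geometric_pmf p) a" "0 < p" "p < 1"
  shows "(\<lambda>k. (1 - p) ^ k * p * a k) sums (\<integral>k. a k \<partial>geometric_pmf p)"
proof -
  have "integrable (count_space UNIV) (\<lambda>k. pmf (geometric_pmf p) k * a k)"
    using assms(1) unfolding measure_pmf_eq_density by (subst (asm) integrable_density) auto
  from sums_integral_count_space_nat[OF this]
  have "(\<lambda>k. pmf (geometric_pmf p) k * a k) sums (\<integral>k. a k \<partial>geometric_pmf p)"
    unfolding measure_pmf_eq_density by (subst integral_density) auto
  then show ?thesis
    using assms(2,3) by simp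
qed

lemma geometric_pmf_telescoping:
  fixes a c :: "nat \<Rightarrow> real"
  assumes int_a: "integrable (geometric_pmf p) a" and int_c: "integrable (geometric_pmf p) c"
    and p: "0 < p" "p < 1"
    and decrease: "\<And>k. a (Suc k) \<le> a k - c k"
  shows "(1 - p) * (\<integral>k. c k \<partial>geometric_pmf p) \<le> p * (a 0 - (\<integral>k. a k \<partial>geometric_pmf p))"
proof -
  let ?w = "\<lambda>k. (1 - p) ^ k * p"
  define Ea where "Ea = (\<integral>k. a k \<partial>geometric_pmf p)"
  define Ec where "Ec = (\<integral>k. c k \<partial>geometric_pmf p)"
  have sa: "(\<lambda>k. ?w k * a k) sums Ea" and sc: "(\<lambda>k. ?w k * c k) sums Ec"
    unfolding Ea_def Ec_def using geometric_pmf_sums p int_a int_c by blast+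
  have shifted: "(\<lambda>k. ?w (Suc k) * a (Suc k)) sums (Ea - p * a 0)"
    using sa by (subst sums_Suc_iff) simp
  have "(\<lambda>k. (1 - p) * (?w k * a k) - ?w (Suc k) * a (Suc k) - (1 - p) * (?w k * c k))
      sums ((1 - p) * Ea - (Ea - p * a 0) - (1 - p) * Ec)"
    using sums_diff[OF sums_diff[OF sums_mult[OF sa] shifted] sums_mult[OF sc]] .
  moreover have "(\<lambda>k. (1 - p) * (?w k * a k) - ?w (Suc k) * a (Suc k) - (1 - p) * (?w k * c k))
      = (\<lambda>k. (1 - p) * ?w k * (a k - a (Suc k) - c k))"
    by (simp add: fun_eq_iff algebra_simps)
  ultimately have S: "(\<lambda>k. (1 - p) * ?w k * (a k - a (Suc k) - c k))
      sums ((1 - p) * Ea - (Ea - p * a 0) - (1 - p) * Ec)"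
    by simp
  have nonneg: "0 \<le> (1 - p) * ?w k * (a k - a (Suc k) - c k)" for k
    using decrease[of k] p by simp
  have "0 \<le> (1 - p) * Ea - (Ea - p * a 0) - (1 - p) * Ec"
    using sums_le[OF nonneg sums_zero S] .
  then show ?thesis
    unfolding Ea_def[symmetric] Ec_def[symmetric] by (simp add: algebra_simps)
qed

section \<open>Sampling a minibatch without replacement\<close>

lemma card_subsets_containing:
  assumes A: "finite A" and C: "C \<subseteq> A" "card C \<le> k"
  shows "card {S. S \<subseteq> A \<and> card S = k \<and> C \<subseteq> S} = (card A - card C) choose (k - card C)"
proof -
  have fC: "finite C" using A C finite_subset by blast
  have "bij_betw (\<lambda>T. T \<union> C) {T. T \<subseteq> A - C \<and> card T = k - card C} {S. S \<subseteq> A \<and> card S = k \<and> C \<subseteq> S}"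
  proof (rule bij_betw_byWitness[where f' = "\<lambda>S. S - C"])
    show "(\<lambda>T. T \<union> C) ` {T. T \<subseteq> A - C \<and> card T = k - card C} \<subseteq> {S. S \<subseteq> A \<and> card S = k \<and> C \<subseteq> S}"
    proof (rule image_subsetI)
      fix T assume T: "T \<in> {T. T \<subseteq> A - C \<and> card T = k - card C}"
      then have "card (T \<union> C) = card T + card C"
        using A fC by (intro card_Un_disjoint) (auto intro: finite_subset)
      then show "T \<union> C \<in> {S. S \<subseteq> A \<and> card S = k \<and> C \<subseteq> S}" using T C by auto
    qed
    show "(\<lambda>S. S - C) ` {S. S \<subseteq> A \<and> card S = k \<and> C \<subseteq> S} \<subseteq> {T. T \<subseteq> A - C \<and> card T = k - card C}"
      using fC by (auto simp: card_Diff_subset)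
  qed auto
  then have "card {S. S \<subseteq> A \<and> card S = k \<and> C \<subseteq> S} = card {T. T \<subseteq> A - C \<and> card T = k - card C}"
    by (simp add: bij_betw_same_card)
  also have "\<dots> = card (A - C) choose (k - card C)" using A by (simp add: n_subsets)
  finally show ?thesis using C fC by (simp add: card_Diff_subset)
qed

lemma sum_subsets_of_size_sum:
  fixes u :: "'b \<Rightarrow> 'c::real_vector"
  assumes A: "finite A" and k: "1 \<le> k"
  shows "(\<Sum>S\<in>{S. S \<subseteq> A \<and> card S = k}. \<Sum>i\<in>S. u i)
       = real ((card A - 1) choose (k - 1)) *\<^sub>R (\<Sum>i\<in>A. u i)"
proof -
  let ?X = "{S. S \<subseteq> A \<and> card S = k}"
  have "finite ?X" using A by (auto intro: finite_subset[of _ "Pow A"])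
  have "(\<Sum>S\<in>?X. \<Sum>i\<in>S. u i) = (\<Sum>S\<in>?X. \<Sum>i\<in>A. if i \<in> S then u i else 0)"
    using sum.inter_restrict[OF A, of u] by (intro sum.cong[OF refl]) (metis Int_absorb1 mem_Collect_eq)
  also have "\<dots> = (\<Sum>i\<in>A. \<Sum>S\<in>?X. if i \<in> S then u i else 0)"
    by (rule sum.swap)
  also have "\<dots> = (\<Sum>i\<in>A. real ((card A - 1) choose (k - 1)) *\<^sub>R u i)"
  proof (rule sum.cong[OF refl])
    fix i assume "i \<in> A"
    have "(\<Sum>S\<in>?X. if i \<in> S then u i else 0) = (\<Sum>S\<in>{S\<in>?X. i \<in> S}. u i)"
      by (rule sum.inter_filter[symmetric, OF \<open>finite ?X\<close>])
    also have "\<dots> = real (card {S\<in>?X. i \<in> S}) *\<^sub>R u i"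
      by (rule sum_constant_scaleR)
    also have "card {S\<in>?X. i \<in> S} = (card A - 1) choose (k - 1)"
      using card_subsets_containing[OF A, of "{i}" k] \<open>i \<in> A\<close> k by (simp add: conj_ac)
    finally show "(\<Sum>S\<in>?X. if i \<in> S then u i else 0) = real ((card A - 1) choose (k - 1)) *\<^sub>R u i"
      by simp
  qed
  finally show ?thesis by (simp add: scaleR_sum_right)
qed

lemma card_subsets_containing_pair:
  assumes A: "finite A" and k: "1 \<le> k" and ij: "i \<in> A" "j \<in> A"
  shows "card {S. S \<subseteq> A \<and> card S = k \<and> i \<in> S \<and> j \<in> S}
    = (if i = j then (card A - 1) choose (k - 1)
       else if 2 \<le> k then (card A - 2) choose (k - 2) else 0)"
proof (cases "i = j")
  case True
  then show ?thesis
    using card_subsets_containing[OF A, of "{i}" k] ij k by (simp add: conj_ac)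
next
  case False
  show ?thesis
  proof (cases "2 \<le> k")
    case True
    then show ?thesis
      using card_subsets_containing[OF A, of "{i, j}" k] ij \<open>i \<noteq> j\<close>
      by (simp add: conj_ac numeral_2_eq_2)
  next
    case False
    have "2 \<le> card S" if "S \<subseteq> A" "i \<in> S" "j \<in> S" for S
    proof -
      have "card {i, j} \<le> card S"
        using that A by (intro card_mono) (auto intro: finite_subset)
      then show ?thesis using \<open>i \<noteq> j\<close> by simp
    qed
    then have "{S. S \<subseteq> A \<and> card S = k \<and> i \<in> S \<and> j \<in> S} = {}"
      using False by blast
    then show ?thesis using False \<open>i \<noteq> j\<close> by (simp only: card.empty) simp
  qed
qed

lemma sum_subsets_of_size_norm_sum_sq:
  fixes d :: "'b \<Rightarrow> 'c::real_inner"
  assumes A: "finite A" and k: "1 \<le> k"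
  defines "c1 \<equiv> real ((card A - 1) choose (k - 1))"
    and "c2 \<equiv> (if 2 \<le> k then real ((card A - 2) choose (k - 2)) else 0)"
  shows "(\<Sum>S\<in>{S. S \<subseteq> A \<and> card S = k}. (norm (\<Sum>i\<in>S. d i))\<^sup>2)
       = c2 * (norm (\<Sum>i\<in>A. d i))\<^sup>2 + (c1 - c2) * (\<Sum>i\<in>A. (norm (d i))\<^sup>2)"
proof -
  let ?X = "{S. S \<subseteq> A \<and> card S = k}"
  have "finite ?X" using A by (auto intro: finite_subset[of _ "Pow A"])
  have count: "real (card {S\<in>?X. i \<in> S \<and> j \<in> S}) = c2 + (if i = j then c1 - c2 else 0)"
    if "i \<in> A" "j \<in> A" for i j
    using card_subsets_containing_pair[OF A k that] by (simp add: c1_def c2_def conj_ac)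
  have "(\<Sum>S\<in>?X. (norm (\<Sum>i\<in>S. d i))\<^sup>2)
      = (\<Sum>S\<in>?X. \<Sum>i\<in>A. \<Sum>j\<in>A. if i \<in> S \<and> j \<in> S then d i \<bullet> d j else 0)"
  proof (rule sum.cong[OF refl])
    fix S assume "S \<in> ?X"
    then have restrict: "(\<Sum>i\<in>S. w i) = (\<Sum>i\<in>A. if i \<in> S then w i else 0)" for w :: "'b \<Rightarrow> real"
      using sum.inter_restrict[OF A, of w S] by (simp add: Int_absorb1)
    show "(norm (\<Sum>i\<in>S. d i))\<^sup>2 = (\<Sum>i\<in>A. \<Sum>j\<in>A. if i \<in> S \<and> j \<in> S then d i \<bullet> d j else 0)"
      unfolding power2_norm_eq_inner inner_sum_left unfolding inner_sum_right restrict
      by (intro sum.cong refl) auto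
  qed
  also have "\<dots> = (\<Sum>i\<in>A. \<Sum>S\<in>?X. \<Sum>j\<in>A. if i \<in> S \<and> j \<in> S then d i \<bullet> d j else 0)"
    by (rule sum.swap)
  also have "\<dots> = (\<Sum>i\<in>A. \<Sum>j\<in>A. \<Sum>S\<in>?X. if i \<in> S \<and> j \<in> S then d i \<bullet> d j else 0)"
    by (rule sum.cong[OF refl], rule sum.swap)
  also have "\<dots> = (\<Sum>i\<in>A. \<Sum>j\<in>A. (c2 + (if i = j then c1 - c2 else 0)) * (d i \<bullet> d j))"
  proof (intro sum.cong[OF refl])
    fix i j assume "i \<in> A" "j \<in> A"
    have "(\<Sum>S\<in>?X. if i \<in> S \<and> j \<in> S then d i \<bullet> d j else 0) = (\<Sum>S\<in>{S\<in>?X. i \<in> S \<and> j \<in> S}. d i \<bullet> d j)"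
      by (rule sum.inter_filter[symmetric, OF \<open>finite ?X\<close>])
    also have "\<dots> = real (card {S\<in>?X. i \<in> S \<and> j \<in> S}) * (d i \<bullet> d j)"
      by simp
    finally show "(\<Sum>S\<in>?X. if i \<in> S \<and> j \<in> S then d i \<bullet> d j else 0)
        = (c2 + (if i = j then c1 - c2 else 0)) * (d i \<bullet> d j)"
      using count[OF \<open>i \<in> A\<close> \<open>j \<in> A\<close>] by simp
  qed
  also have "\<dots> = (\<Sum>i\<in>A. \<Sum>j\<in>A. c2 * (d i \<bullet> d j) + (if j = i then (c1 - c2) * (d i \<bullet> d j) else 0))"
    by (intro sum.cong refl) (auto simp: algebra_simps)
  also have "\<dots> = c2 * (\<Sum>i\<in>A. \<Sum>j\<in>A. d i \<bullet> d j) + (c1 - c2) * (\<Sum>i\<in>A. d i \<bullet> d i)"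
    using A by (simp add: sum.distrib sum_distrib_left)
  also have "\<dots> = c2 * (norm (\<Sum>i\<in>A. d i))\<^sup>2 + (c1 - c2) * (\<Sum>i\<in>A. (norm (d i))\<^sup>2)"
    unfolding power2_norm_eq_inner inner_sum_left unfolding inner_sum_right by simp
  finally show ?thesis .
qed

lemma binomial_pairs_le:
  assumes "2 \<le> k" "k \<le> n"
  shows "(real n)\<^sup>2 * real ((n - 2) choose (k - 2)) \<le> (real k)\<^sup>2 * real (n choose k)"
proof -
  define c where "c = real ((n - 2) choose (k - 2))"
  define N where "N = real (n choose k)"
  define M where "M = real ((n - 1) choose (k - 1))"
  have first: "real k * N = real n * M"
    using times_binomial_minus1_eq[of k n] assms unfolding N_def M_def by (simp flip: of_nat_mult)
  have "(k - 1) * ((n - 1) choose (k - 1)) = (n - 1) * ((n - 2) choose (k - 2))"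
    using times_binomial_minus1_eq[of "k - 1" "n - 1"] assms by (simp add: numeral_2_eq_2)
  from arg_cong[where f = real, OF this] have second: "(real k - 1) * M = (real n - 1) * c"
    using assms unfolding c_def M_def by (simp add: of_nat_diff)
  have "real n * (real n - 1) * c = real n * ((real k - 1) * M)"
    unfolding second by (simp only: mult.assoc)
  also have "\<dots> = (real k - 1) * (real n * M)"
    by (simp only: mult.left_commute)
  also have "\<dots> = real k * (real k - 1) * N"
    unfolding first[symmetric] by (simp only: mult.left_commute mult.assoc)
  finally have pairs: "real n * (real n - 1) * c = real k * (real k - 1) * N" .
  have "(real n - 1) * ((real n)\<^sup>2 * c) = real n * (real n * (real n - 1) * c)"
    by (simp add: power2_eq_square algebra_simps)
  also have "\<dots> = real n * (real k * (real k - 1) * N)"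
    unfolding pairs ..
  also have "\<dots> \<le> (real n - 1) * ((real k)\<^sup>2 * N)"
  proof -
    have "real n * (real k - 1) \<le> real k * (real n - 1)" using assms by (simp add: algebra_simps)
    then have "real n * (real k - 1) * (real k * N) \<le> real k * (real n - 1) * (real k * N)"
      by (rule mult_right_mono) (simp add: N_def)
    then show ?thesis by (simp add: power2_eq_square algebra_simps)
  qed
  finally show ?thesis
    using assms unfolding c_def[symmetric] N_def[symmetric] by simp
qed

lemma sum_norm_sq_centered:
  fixes v :: "'s \<Rightarrow> 'a::real_inner"
  assumes "(\<Sum>S\<in>X. v S) = real (card X) *\<^sub>R m"
  shows "(\<Sum>S\<in>X. (norm (v S - m))\<^sup>2) = (\<Sum>S\<in>X. (norm (v S))\<^sup>2) - real (card X) * (norm m)\<^sup>2"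
proof -
  have "(norm (v S - m))\<^sup>2 = (norm (v S))\<^sup>2 - 2 * (v S \<bullet> m) + (norm m)\<^sup>2" for S
    by (simp add: power2_norm_eq_inner inner_diff_left inner_diff_right inner_commute)
  then have "(\<Sum>S\<in>X. (norm (v S - m))\<^sup>2)
      = (\<Sum>S\<in>X. (norm (v S))\<^sup>2) - 2 * ((\<Sum>S\<in>X. v S) \<bullet> m) + real (card X) * (norm m)\<^sup>2"
    by (simp add: sum.distrib sum_subtractf sum_distrib_left inner_sum_left)
  then show ?thesis
    using assms by (simp add: power2_norm_eq_inner)
qed

lemma norm_add_sq_le:
  fixes a c :: "'a::real_inner"
  shows "(norm (a + c))\<^sup>2 \<le> 2 * (norm a)\<^sup>2 + 2 * (norm c)\<^sup>2"
proof -
  have "(norm (a + c))\<^sup>2 + (norm (a - c))\<^sup>2 = 2 * (norm a)\<^sup>2 + 2 * (norm c)\<^sup>2"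
    by (simp add: power2_norm_eq_inner inner_add_left inner_add_right inner_diff_left
        inner_diff_right inner_commute)
  then show ?thesis by (metis le_add_same_cancel1 zero_le_power2)
qed

lemma minibatch_mean_variance:
  fixes d :: "'b \<Rightarrow> 'c::real_inner"
  assumes A: "finite A" "card A = n" and b: "1 \<le> b" "b \<le> n"
  defines "X \<equiv> {S. S \<subseteq> A \<and> card S = b}" and "\<mu> \<equiv> (1 / real n) *\<^sub>R (\<Sum>i\<in>A. d i)"
  shows "(\<Sum>S\<in>X. (1 / real b) *\<^sub>R (\<Sum>i\<in>S. d i)) = real (card X) *\<^sub>R \<mu>"
    and "(\<Sum>S\<in>X. (norm ((1 / real b) *\<^sub>R (\<Sum>i\<in>S. d i) - \<mu>))\<^sup>2)
           \<le> real (card X) / (real b * real n) * (\<Sum>i\<in>A. (norm (d i))\<^sup>2)"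
proof -
  define c1 where "c1 = real ((n - 1) choose (b - 1))"
  define c2 where "c2 = (if 2 \<le> b then real ((n - 2) choose (b - 2)) else 0)"
  have pos: "0 < real n" "0 < real b" using b by auto
  have card_X: "card X = n choose b" unfolding X_def using A by (simp add: n_subsets)
  have c1: "c1 = real b * real (card X) / real n"
    using times_binomial_minus1_eq[of b n] b pos unfolding c1_def card_X
    by (simp add: field_simps flip: of_nat_mult)
  have c2: "(real n)\<^sup>2 * c2 \<le> (real b)\<^sup>2 * real (card X)" and "0 \<le> c2"
    using binomial_pairs_le[of b n] b unfolding c2_def card_X by auto
  have "(\<Sum>S\<in>X. \<Sum>i\<in>S. d i) = c1 *\<^sub>R (\<Sum>i\<in>A. d i)"
    using sum_subsets_of_size_sum[OF A(1) b(1), of d] unfolding X_def c1_def A(2) .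
  then show mean: "(\<Sum>S\<in>X. (1 / real b) *\<^sub>R (\<Sum>i\<in>S. d i)) = real (card X) *\<^sub>R \<mu>"
    using pos by (simp add: c1 \<mu>_def flip: scaleR_sum_right)
  define D where "D = (norm (\<Sum>i\<in>A. d i))\<^sup>2"
  define Q where "Q = (\<Sum>i\<in>A. (norm (d i))\<^sup>2)"
  have "0 \<le> D" "0 \<le> Q" unfolding D_def Q_def by (simp_all add: sum_nonneg)
  have "(\<Sum>S\<in>X. (norm (\<Sum>i\<in>S. d i))\<^sup>2) = c2 * D + (c1 - c2) * Q"
    using sum_subsets_of_size_norm_sum_sq[OF A(1) b(1), of d, unfolded A(2)]
    unfolding X_def c1_def c2_def D_def Q_def .
  then have "(\<Sum>S\<in>X. (norm ((1 / real b) *\<^sub>R (\<Sum>i\<in>S. d i)))\<^sup>2) = (c2 * D + (c1 - c2) * Q) / (real b)\<^sup>2"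
    by (simp add: power_divide flip: sum_divide_distrib)
  also have "\<dots> = c2 * D / (real b)\<^sup>2 + c1 * Q / (real b)\<^sup>2 - c2 * Q / (real b)\<^sup>2"
    using pos by (simp add: field_simps)
  moreover have "c2 * D / (real b)\<^sup>2 \<le> real (card X) * (norm \<mu>)\<^sup>2"
    using mult_right_mono[OF c2 \<open>0 \<le> D\<close>] pos
    by (simp add: \<mu>_def D_def power_divide field_simps)
  moreover have "c1 * Q / (real b)\<^sup>2 = real (card X) / (real b * real n) * Q"
    using pos by (simp add: c1 power2_eq_square)
  moreover have "0 \<le> c2 * Q / (real b)\<^sup>2"
    using \<open>0 \<le> c2\<close> \<open>0 \<le> Q\<close> by simp
  ultimately show "(\<Sum>S\<in>X. (norm ((1 / real b) *\<^sub>R (\<Sum>i\<in>S. d i) - \<mu>))\<^sup>2)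
      \<le> real (card X) / (real b * real n) * (\<Sum>i\<in>A. (norm (d i))\<^sup>2)"
    unfolding sum_norm_sq_centered[OF mean] Q_def[symmetric] by linarith
qed

section \<open>Smooth functions\<close>

lemma quadratic_upper_bound:
  fixes f :: "'a::real_inner \<Rightarrow> real" and gf :: "'a \<Rightarrow> 'a"
  assumes deriv: "\<And>z. (f has_derivative (\<lambda>h. gf z \<bullet> h)) (at z)"
    and lipschitz: "\<And>z w. norm (gf z - gf w) \<le> L * norm (z - w)"
  shows "f y \<le> f x + gf x \<bullet> (y - x) + L / 2 * (norm (y - x))\<^sup>2"
proof -
  define d where "d = y - x"
  define \<phi> where "\<phi> = (\<lambda>t. f (x + t *\<^sub>R d) - t * (gf x \<bullet> d) - L / 2 * t\<^sup>2 * (norm d)\<^sup>2)"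
  have "\<phi> 1 \<le> \<phi> 0"
  proof (rule DERIV_nonpos_imp_nonincreasing[of 0 1])
    fix t :: real assume t: "0 \<le> t" "t \<le> 1"
    have "((\<lambda>t. f (x + t *\<^sub>R d)) has_derivative (\<lambda>s. gf (x + t *\<^sub>R d) \<bullet> (s *\<^sub>R d))) (at t)"
      by (rule has_derivative_compose[of "\<lambda>t. x + t *\<^sub>R d" _ _ _ f, OF _ deriv])
         (auto intro!: derivative_eq_intros)
    moreover have "(\<lambda>s. gf (x + t *\<^sub>R d) \<bullet> (s *\<^sub>R d)) = (*) (gf (x + t *\<^sub>R d) \<bullet> d)"
      by (auto simp: fun_eq_iff)
    ultimately have chain: "((\<lambda>t. f (x + t *\<^sub>R d)) has_real_derivative (gf (x + t *\<^sub>R d) \<bullet> d)) (at t)"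
      unfolding has_field_derivative_def by simp
    have "(\<phi> has_real_derivative (gf (x + t *\<^sub>R d) \<bullet> d - gf x \<bullet> d - L * t * (norm d)\<^sup>2)) (at t)"
      unfolding \<phi>_def by (rule derivative_eq_intros chain refl)+ (simp add: algebra_simps)
    moreover have "gf (x + t *\<^sub>R d) \<bullet> d - gf x \<bullet> d \<le> L * t * (norm d)\<^sup>2"
    proof -
      have "gf (x + t *\<^sub>R d) \<bullet> d - gf x \<bullet> d \<le> norm (gf (x + t *\<^sub>R d) - gf x) * norm d"
        by (metis inner_diff_left norm_cauchy_schwarz)
      also have "\<dots> \<le> L * norm (t *\<^sub>R d) * norm d"
        using lipschitz[of "x + t *\<^sub>R d" x] by (intro mult_right_mono) auto
      finally show ?thesis using t by (simp add: power2_eq_square mult.assoc)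
    qed
    ultimately show "\<exists>y. (\<phi> has_real_derivative y) (at t) \<and> y \<le> 0" by force
  qed simp
  then show ?thesis unfolding \<phi>_def d_def by (simp add: algebra_simps)
qed

lemma lipschitz_constant_nonneg:
  fixes g :: "'a::euclidean_space \<Rightarrow> 'b::real_normed_vector"
  assumes "\<And>x y. norm (g x - g y) \<le> L * norm (x - y)"
  shows "0 \<le> L"
proof -
  obtain u :: 'a where "u \<in> Basis" using nonempty_Basis by blast
  then have "0 < norm u" by auto
  moreover have "0 \<le> L * norm u"
    using order_trans[OF norm_ge_zero assms[of u 0]] by simp
  ultimately show ?thesis by (simp add: zero_le_mult_iff)
qed

lemma gradB_lipschitz:
  assumes "finite A" "A \<noteq> {}"
    and lipschitz: "\<And>i x y. i \<in> A \<Longrightarrow> norm (G i x - G i y) \<le> L * norm (x - y)"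
  shows "norm (gradB G A x - gradB G A y) \<le> L * norm (x - y)"
proof -
  have "norm (gradB G A x - gradB G A y) = norm (\<Sum>i\<in>A. G i x - G i y) / real (card A)"
    by (simp add: gradB_def sum_subtractf flip: scaleR_diff_right)
  also have "\<dots> \<le> (\<Sum>i\<in>A. L * norm (x - y)) / real (card A)"
    using lipschitz by (intro divide_right_mono order_trans[OF norm_sum sum_mono]) auto
  also have "\<dots> = L * norm (x - y)"
    using assms(1,2) by simp
  finally show ?thesis .
qed

lemma has_derivative_average:
  assumes "\<And>i. i \<in> A \<Longrightarrow> (F i has_derivative (\<lambda>h. G i x \<bullet> h)) (at x)"
  shows "((\<lambda>x. (1 / real (card A)) * (\<Sum>i\<in>A. F i x)) has_derivative (\<lambda>h. gradB G A x \<bullet> h)) (at x)"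
proof -
  have "((\<lambda>x. (1 / real (card A)) * (\<Sum>i\<in>A. F i x))
      has_derivative (\<lambda>h. (1 / real (card A)) * (\<Sum>i\<in>A. G i x \<bullet> h))) (at x)"
    using assms by (intro has_derivative_mult_right has_derivative_sum) auto
  then show ?thesis
    by (simp add: gradB_def inner_sum_left)
qed

lemma average_quadratic_upper_bound:
  fixes F :: "nat \<Rightarrow> 'a::euclidean_space \<Rightarrow> real"
  assumes "1 \<le> n"
    and grad: "\<And>i x. i \<in> {1..n} \<Longrightarrow> (F i has_derivative (\<lambda>h. G i x \<bullet> h)) (at x)"
    and smooth: "\<And>i x y. i \<in> {1..n} \<Longrightarrow> norm (G i x - G i y) \<le> L * norm (x - y)"
  defines "f \<equiv> \<lambda>x. (1 / real n) * (\<Sum>i=1..n. F i x)"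
  shows "f y \<le> f x + gradB G {1..n} x \<bullet> (y - x) + L / 2 * (norm (y - x))\<^sup>2"
proof (rule quadratic_upper_bound)
  have "f = (\<lambda>x. (1 / real (card {1..n})) * (\<Sum>i\<in>{1..n}. F i x))"
    by (simp add: f_def)
  then show "(f has_derivative (\<lambda>h. gradB G {1..n} z \<bullet> h)) (at z)" for z
    using grad by (simp only: has_derivative_average)
  show "norm (gradB G {1..n} z - gradB G {1..n} w) \<le> L * norm (z - w)" for z w
    using smooth \<open>1 \<le> n\<close> by (intro gradB_lipschitz) auto
qed

lemma descent_average:
  fixes v :: "'s \<Rightarrow> 'a::real_inner" and f :: "'a \<Rightarrow> real"
  assumes X: "finite X" "X \<noteq> {}"
    and mean: "(\<Sum>S\<in>X. v S) = real (card X) *\<^sub>R m"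
    and variance: "(\<Sum>S\<in>X. (norm (v S - m))\<^sup>2) \<le> real (card X) * V"
    and quadratic: "\<And>y. f y \<le> f x + gx \<bullet> (y - x) + L / 2 * (norm (y - x))\<^sup>2"
    and "0 \<le> L"
  shows "(\<Sum>S\<in>X. f (x - eta *\<^sub>R v S)) / real (card X)
         \<le> f x - eta * (gx \<bullet> m) + L * eta\<^sup>2 / 2 * ((norm m)\<^sup>2 + V)"
proof -
  let ?N = "real (card X)"
  have "?N > 0" using X by (simp add: card_gt_0_iff)
  have "(\<Sum>S\<in>X. f (x - eta *\<^sub>R v S))
      \<le> (\<Sum>S\<in>X. f x - eta * (gx \<bullet> v S) + L * eta\<^sup>2 / 2 * (norm (v S))\<^sup>2)"
  proof (rule sum_mono)
    fix S
    have "f (x - eta *\<^sub>R v S) \<le> f x + gx \<bullet> (x - eta *\<^sub>R v S - x) + L / 2 * (norm (x - eta *\<^sub>R v S - x))\<^sup>2"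
      by (rule quadratic)
    then show "f (x - eta *\<^sub>R v S) \<le> f x - eta * (gx \<bullet> v S) + L * eta\<^sup>2 / 2 * (norm (v S))\<^sup>2"
      by (simp add: power_mult_distrib)
  qed
  also have "\<dots> = ?N * f x - eta * (gx \<bullet> (\<Sum>S\<in>X. v S)) + L * eta\<^sup>2 / 2 * (\<Sum>S\<in>X. (norm (v S))\<^sup>2)"
    by (simp add: sum.distrib sum_subtractf sum_distrib_left inner_sum_right)
  also have "\<dots> \<le> ?N * f x - eta * (gx \<bullet> (\<Sum>S\<in>X. v S)) + L * eta\<^sup>2 / 2 * (?N * V + ?N * (norm m)\<^sup>2)"
    using sum_norm_sq_centered[OF mean] variance \<open>0 \<le> L\<close> by (intro add_left_mono mult_left_mono) auto
  also have "\<dots> = ?N * (f x - eta * (gx \<bullet> m) + L * eta\<^sup>2 / 2 * ((norm m)\<^sup>2 + V))"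
    using mean by (simp add: algebra_simps)
  finally show ?thesis
    using \<open>?N > 0\<close> by (simp add: pos_divide_le_eq mult.commute)
qed

section \<open>One inner step of Algorithm 3\<close>

lemma finite_subsets_of_size: "finite (subsets_of_size n b)"
  unfolding subsets_of_size_def by (rule finite_subset[of _ "Pow {1..n}"]) auto

lemma subsets_of_size_nonempty: "b \<le> n \<Longrightarrow> subsets_of_size n b \<noteq> {}"
  unfolding subsets_of_size_def by (rule ex_in_conv[THEN iffD1], rule exI[of _ "{1..b}"]) auto

lemma svrg_direction_mean_variance:
  fixes G :: "nat \<Rightarrow> 'a::real_inner \<Rightarrow> 'a" and x x\<^sub>0 g :: 'a and lam L :: real
  assumes b: "1 \<le> b" "b \<le> n"
    and smooth: "\<And>i x y. i \<in> {1..n} \<Longrightarrow> norm (G i x - G i y) \<le> L * norm (x - y)"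
  defines "v \<equiv> \<lambda>S. (1 - lam) *\<^sub>R (gradB G S x - gradB G S x\<^sub>0) + lam *\<^sub>R g"
    and "m \<equiv> (1 - lam) *\<^sub>R (gradB G {1..n} x - gradB G {1..n} x\<^sub>0) + lam *\<^sub>R g"
  shows "(\<Sum>S\<in>subsets_of_size n b. v S) = real (card (subsets_of_size n b)) *\<^sub>R m"
    and "(\<Sum>S\<in>subsets_of_size n b. (norm (v S - m))\<^sup>2)
      \<le> real (card (subsets_of_size n b)) * ((1 - lam)\<^sup>2 * L\<^sup>2 * (norm (x - x\<^sub>0))\<^sup>2 / real b)"
proof -
  let ?X = "subsets_of_size n b"
  define d where "d i = G i x - G i x\<^sub>0" for i
  define \<mu> where "\<mu> = (1 / real n) *\<^sub>R (\<Sum>i\<in>{1..n}. d i)"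
  have X: "?X = {S. S \<subseteq> {1..n} \<and> card S = b}" by (simp add: subsets_of_size_def)
  have "card {1..n} = n" by simp
  note minibatch = minibatch_mean_variance[OF finite_atLeastAtMost this b, of d, folded X \<mu>_def]
  have v: "v S = (1 - lam) *\<^sub>R ((1 / real b) *\<^sub>R (\<Sum>i\<in>S. d i)) + lam *\<^sub>R g" if "S \<in> ?X" for S
    using that by (simp add: v_def subsets_of_size_def gradB_def d_def sum_subtractf scaleR_diff_right)
  have m: "m = (1 - lam) *\<^sub>R \<mu> + lam *\<^sub>R g"
    by (simp add: m_def \<mu>_def gradB_def d_def sum_subtractf scaleR_diff_right)
  have "(\<Sum>S\<in>?X. v S) = (\<Sum>S\<in>?X. (1 - lam) *\<^sub>R ((1 / real b) *\<^sub>R (\<Sum>i\<in>S. d i)) + lam *\<^sub>R g)"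
    by (rule sum.cong[OF refl v])
  also have "\<dots> = (1 - lam) *\<^sub>R (\<Sum>S\<in>?X. (1 / real b) *\<^sub>R (\<Sum>i\<in>S. d i)) + real (card ?X) *\<^sub>R (lam *\<^sub>R g)"
    by (simp only: sum.distrib scaleR_sum_right sum_constant_scaleR)
  also have "\<dots> = real (card ?X) *\<^sub>R m"
    unfolding minibatch(1) m by (simp add: algebra_simps)
  finally show mean: "(\<Sum>S\<in>?X. v S) = real (card ?X) *\<^sub>R m" .
  have "(norm (v S - m))\<^sup>2 = (1 - lam)\<^sup>2 * (norm ((1 / real b) *\<^sub>R (\<Sum>i\<in>S. d i) - \<mu>))\<^sup>2"
    if "S \<in> ?X" for S
  proof -
    have "v S - m = (1 - lam) *\<^sub>R ((1 / real b) *\<^sub>R (\<Sum>i\<in>S. d i) - \<mu>)"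
      unfolding v[OF that] m by (simp add: algebra_simps)
    then show ?thesis by (simp add: power_mult_distrib)
  qed
  then have "(\<Sum>S\<in>?X. (norm (v S - m))\<^sup>2)
      = (1 - lam)\<^sup>2 * (\<Sum>S\<in>?X. (norm ((1 / real b) *\<^sub>R (\<Sum>i\<in>S. d i) - \<mu>))\<^sup>2)"
    by (simp add: sum_distrib_left)
  also have "\<dots> \<le> (1 - lam)\<^sup>2 * (real (card ?X) / (real b * real n) * (\<Sum>i\<in>{1..n}. (norm (d i))\<^sup>2))"
    using minibatch(2) by (rule mult_left_mono) simp
  also have "\<dots> \<le> (1 - lam)\<^sup>2 * (real (card ?X) / (real b * real n) * (\<Sum>i\<in>{1..n}. (L * norm (x - x\<^sub>0))\<^sup>2))"
    using smooth by (intro mult_left_mono sum_mono power_mono) (auto simp: d_def)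
  also have "\<dots> = real (card ?X) * ((1 - lam)\<^sup>2 * L\<^sup>2 * (norm (x - x\<^sub>0))\<^sup>2 / real b)"
    using b by (simp add: power_mult_distrib)
  finally show "(\<Sum>S\<in>?X. (norm (v S - m))\<^sup>2)
      \<le> real (card ?X) * ((1 - lam)\<^sup>2 * L\<^sup>2 * (norm (x - x\<^sub>0))\<^sup>2 / real b)" .
qed

lemma svrg_step_descent:
  fixes G :: "nat \<Rightarrow> 'a::real_inner \<Rightarrow> 'a" and f :: "'a \<Rightarrow> real" and x x\<^sub>0 g :: 'a
    and lam eta L :: real
  assumes b: "1 \<le> b" "b \<le> n"
    and smooth: "\<And>i x y. i \<in> {1..n} \<Longrightarrow> norm (G i x - G i y) \<le> L * norm (x - y)"
    and quadratic: "\<And>y. f y \<le> f x + gradB G {1..n} x \<bullet> (y - x) + L / 2 * (norm (y - x))\<^sup>2"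
    and "0 \<le> L"
  defines "gf \<equiv> gradB G {1..n}" and "e \<equiv> lam *\<^sub>R g - (1 - lam) *\<^sub>R gradB G {1..n} x\<^sub>0"
  shows "(\<integral>y. f y \<partial>svrg_step n G lam eta b g x\<^sub>0 x)
    \<le> f x - (eta * (1 - lam) * (1 - (1 - lam) * L * eta) * (norm (gf x))\<^sup>2 + eta * (e \<bullet> gf x)
             - L * eta\<^sup>2 * (norm e)\<^sup>2 - (1 - lam)\<^sup>2 * eta\<^sup>2 * L ^ 3 / (2 * real b) * (norm (x - x\<^sub>0))\<^sup>2)"
proof -
  let ?X = "subsets_of_size n b"
  define V where "V = (1 - lam)\<^sup>2 * L\<^sup>2 * (norm (x - x\<^sub>0))\<^sup>2 / real b"
  define m where "m = (1 - lam) *\<^sub>R gf x + e"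
  have m_eq: "(1 - lam) *\<^sub>R (gradB G {1..n} x - gradB G {1..n} x\<^sub>0) + lam *\<^sub>R g = m"
    by (simp add: m_def e_def gf_def algebra_simps)
  have mean: "(\<Sum>S\<in>?X. (1 - lam) *\<^sub>R (gradB G S x - gradB G S x\<^sub>0) + lam *\<^sub>R g) = real (card ?X) *\<^sub>R m"
    and variance: "(\<Sum>S\<in>?X. (norm ((1 - lam) *\<^sub>R (gradB G S x - gradB G S x\<^sub>0) + lam *\<^sub>R g - m))\<^sup>2)
      \<le> real (card ?X) * V"
    using svrg_direction_mean_variance[where G = G and L = L and lam = lam and x = x and x\<^sub>0 = x\<^sub>0
        and g = g, OF b smooth]
    unfolding m_eq V_def by auto
  have "(\<integral>y. f y \<partial>svrg_step n G lam eta b g x\<^sub>0 x)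
      = (\<Sum>S\<in>?X. f (x - eta *\<^sub>R ((1 - lam) *\<^sub>R (gradB G S x - gradB G S x\<^sub>0) + lam *\<^sub>R g))) / real (card ?X)"
    using b by (simp add: svrg_step_def integral_pmf_of_set finite_subsets_of_size subsets_of_size_nonempty)
  also have "\<dots> \<le> f x - eta * (gf x \<bullet> m) + L * eta\<^sup>2 / 2 * ((norm m)\<^sup>2 + V)"
    by (rule descent_average[OF finite_subsets_of_size subsets_of_size_nonempty[OF b(2)]
          mean variance quadratic[folded gf_def] \<open>0 \<le> L\<close>])
  also have "\<dots> \<le> f x - eta * ((1 - lam) * (norm (gf x))\<^sup>2 + e \<bullet> gf x)
      + L * eta\<^sup>2 / 2 * (2 * (1 - lam)\<^sup>2 * (norm (gf x))\<^sup>2 + 2 * (norm e)\<^sup>2 + V)"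
  proof -
    have "gf x \<bullet> m = (1 - lam) * (norm (gf x))\<^sup>2 + e \<bullet> gf x"
      by (simp add: m_def inner_add_right power2_norm_eq_inner inner_commute)
    moreover have "(norm m)\<^sup>2 \<le> 2 * (1 - lam)\<^sup>2 * (norm (gf x))\<^sup>2 + 2 * (norm e)\<^sup>2"
      using norm_add_sq_le[of "(1 - lam) *\<^sub>R gf x" e] by (simp add: m_def power_mult_distrib)
    ultimately show ?thesis
      using \<open>0 \<le> L\<close> by (simp add: mult_left_mono)
  qed
  also have "\<dots> = f x - (eta * (1 - lam) * (1 - (1 - lam) * L * eta) * (norm (gf x))\<^sup>2 + eta * (e \<bullet> gf x)
             - L * eta\<^sup>2 * (norm e)\<^sup>2 - (1 - lam)\<^sup>2 * eta\<^sup>2 * L ^ 3 / (2 * real b) * (norm (x - x\<^sub>0))\<^sup>2)"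
    using b by (simp add: V_def power2_eq_square power3_eq_cube field_simps)
  finally show ?thesis .
qed

section \<open>One epoch of Algorithm 3\<close>

lemma svrg_inner_Suc_right:
  "svrg_inner n G lam eta b g x\<^sub>0 (Suc k) x
     = bind_pmf (svrg_inner n G lam eta b g x\<^sub>0 k x) (svrg_step n G lam eta b g x\<^sub>0)"
proof (induction k arbitrary: x)
  case 0
  have "svrg_inner n G lam eta b g x\<^sub>0 0 = return_pmf" by (rule ext) simp
  then show ?case by (simp add: bind_return_pmf bind_return_pmf')
next
  case (Suc k)
  have IH: "svrg_inner n G lam eta b g x\<^sub>0 (Suc k)
      = (\<lambda>y. bind_pmf (svrg_inner n G lam eta b g x\<^sub>0 k y) (svrg_step n G lam eta b g x\<^sub>0))"
    using Suc.IH by (rule ext)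
  have "svrg_inner n G lam eta b g x\<^sub>0 (Suc (Suc k)) x
      = bind_pmf (svrg_step n G lam eta b g x\<^sub>0 x) (svrg_inner n G lam eta b g x\<^sub>0 (Suc k))"
    by (rule svrg_inner.simps(2))
  also have "\<dots> = bind_pmf (svrg_step n G lam eta b g x\<^sub>0 x)
      (\<lambda>y. bind_pmf (svrg_inner n G lam eta b g x\<^sub>0 k y) (svrg_step n G lam eta b g x\<^sub>0))"
    by (simp only: IH)
  also have "\<dots> = bind_pmf (bind_pmf (svrg_step n G lam eta b g x\<^sub>0 x) (svrg_inner n G lam eta b g x\<^sub>0 k))
      (svrg_step n G lam eta b g x\<^sub>0)"
    by (simp only: bind_assoc_pmf)
  also have "bind_pmf (svrg_step n G lam eta b g x\<^sub>0 x) (svrg_inner n G lam eta b g x\<^sub>0 k)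
      = svrg_inner n G lam eta b g x\<^sub>0 (Suc k) x"
    by (rule svrg_inner.simps(2)[symmetric])
  finally show ?case .
qed

lemma finite_set_pmf_svrg_inner:
  assumes "b \<le> n"
  shows "finite (set_pmf (svrg_inner n G lam eta b g x\<^sub>0 k x))"
proof (induction k arbitrary: x)
  case (Suc k)
  have "finite (set_pmf (svrg_step n G lam eta b g x\<^sub>0 y))" for y
    using assms by (simp add: svrg_step_def finite_subsets_of_size subsets_of_size_nonempty)
  then show ?case using Suc by (simp add: set_bind_pmf)
qed simp

lemma svrg_inner_integral_decrease:
  fixes f h :: "'a::real_vector \<Rightarrow> real"
  assumes "b \<le> n"
    and step: "\<And>x. (\<integral>y. f y \<partial>svrg_step n G lam eta b g x\<^sub>0 x) \<le> f x - h x"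
  shows "(\<integral>y. f y \<partial>svrg_inner n G lam eta b g x\<^sub>0 (Suc k) x)
      \<le> (\<integral>y. f y \<partial>svrg_inner n G lam eta b g x\<^sub>0 k x) - (\<integral>y. h y \<partial>svrg_inner n G lam eta b g x\<^sub>0 k x)"
proof -
  have integrable: "integrable (svrg_inner n G lam eta b g x\<^sub>0 j x) u" for j and u :: "'a \<Rightarrow> real"
    by (rule integrable_measure_pmf_finite[OF finite_set_pmf_svrg_inner[OF assms(1)]])
  have "(\<integral>y. f y \<partial>svrg_inner n G lam eta b g x\<^sub>0 (Suc k) x)
      = (\<integral>z. \<integral>y. f y \<partial>svrg_step n G lam eta b g x\<^sub>0 z \<partial>svrg_inner n G lam eta b g x\<^sub>0 k x)"
    using integral_bind_pmf_integrable(3)[OF integrable[of "Suc k", unfolded svrg_inner_Suc_right]]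
    by (simp only: svrg_inner_Suc_right)
  also have "\<dots> \<le> (\<integral>z. f z - h z \<partial>svrg_inner n G lam eta b g x\<^sub>0 k x)"
    by (intro integral_mono integrable step)
  also have "\<dots> = (\<integral>y. f y \<partial>svrg_inner n G lam eta b g x\<^sub>0 k x) - (\<integral>y. h y \<partial>svrg_inner n G lam eta b g x\<^sub>0 k x)"
    by (simp add: integrable)
  finally show ?thesis .
qed

text \<open>The law of the epoch output \<open>x~_j\<close> given \<open>x~_(j-1) = x\<^sub>0\<close> and \<open>I_j = I\<close>.\<close>

definition svrg_output :: "nat \<Rightarrow> (nat \<Rightarrow> 'a \<Rightarrow> 'a::real_vector) \<Rightarrow> real \<Rightarrow> real \<Rightarrow> nat \<Rightarrow> nat
    \<Rightarrow> 'a \<Rightarrow> nat set \<Rightarrow> 'a pmf" where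
  "svrg_output n G lam eta B b x\<^sub>0 I =
     bind_pmf (geometric_pmf (real b / (real B + real b)))
       (\<lambda>N. svrg_inner n G lam eta b (gradB G I x\<^sub>0) x\<^sub>0 N x\<^sub>0)"

lemma svrg_joint_eq:
  "svrg_joint n G lam eta B b P0 =
     bind_pmf P0 (\<lambda>x\<^sub>0. bind_pmf (pmf_of_set (subsets_of_size n B)) (\<lambda>I.
       map_pmf (\<lambda>x. (x\<^sub>0, I, x)) (svrg_output n G lam eta B b x\<^sub>0 I)))"
  by (simp add: svrg_joint_def svrg_epoch_def svrg_output_def map_bind_pmf map_pmf_comp)

lemma integrable_svrg_output:
  fixes h :: "'a::real_vector \<times> nat set \<times> 'a \<Rightarrow> real"
  assumes "integrable (svrg_joint n G lam eta B b P0) h"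
    and "x\<^sub>0 \<in> set_pmf P0" "I \<in> set_pmf (pmf_of_set (subsets_of_size n B))"
  shows "integrable (svrg_output n G lam eta B b x\<^sub>0 I) (\<lambda>x. h (x\<^sub>0, I, x))"
proof -
  have "integrable (bind_pmf (pmf_of_set (subsets_of_size n B))
      (\<lambda>I. map_pmf (\<lambda>x. (x\<^sub>0, I, x)) (svrg_output n G lam eta B b x\<^sub>0 I))) h"
    using integrable_bind_pmf_kernel[OF assms(1)[unfolded svrg_joint_eq]] assms(2) by blast
  then have "integrable (map_pmf (\<lambda>x. (x\<^sub>0, I, x)) (svrg_output n G lam eta B b x\<^sub>0 I)) h"
    using integrable_bind_pmf_kernel assms(3) by blast
  then show ?thesis by simp
qed

lemma svrg_joint_integral_nonpos:
  fixes h :: "'a::real_vector \<times> nat set \<times> 'a \<Rightarrow> real"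
  assumes int: "integrable (svrg_joint n G lam eta B b P0) h"
    and epoch: "\<And>x\<^sub>0 I. x\<^sub>0 \<in> set_pmf P0 \<Longrightarrow> I \<in> set_pmf (pmf_of_set (subsets_of_size n B))
      \<Longrightarrow> (\<integral>x. h (x\<^sub>0, I, x) \<partial>svrg_output n G lam eta B b x\<^sub>0 I) \<le> 0"
  shows "(\<integral>y. h y \<partial>svrg_joint n G lam eta B b P0) \<le> 0"
  unfolding svrg_joint_eq
proof (rule integral_bind_pmf_nonpos[OF int[unfolded svrg_joint_eq]])
  fix x\<^sub>0 assume x\<^sub>0: "x\<^sub>0 \<in> set_pmf P0"
  let ?U = "pmf_of_set (subsets_of_size n B)"
  have "integrable (bind_pmf ?U (\<lambda>I. map_pmf (\<lambda>x. (x\<^sub>0, I, x)) (svrg_output n G lam eta B b x\<^sub>0 I))) h"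
    using integrable_bind_pmf_kernel[OF int[unfolded svrg_joint_eq]] x\<^sub>0 by blast
  then show "(\<integral>y. h y \<partial>bind_pmf ?U (\<lambda>I. map_pmf (\<lambda>x. (x\<^sub>0, I, x)) (svrg_output n G lam eta B b x\<^sub>0 I))) \<le> 0"
  proof (rule integral_bind_pmf_nonpos)
    fix I assume "I \<in> set_pmf ?U"
    then show "(\<integral>y. h y \<partial>map_pmf (\<lambda>x. (x\<^sub>0, I, x)) (svrg_output n G lam eta B b x\<^sub>0 I)) \<le> 0"
      using epoch[OF x\<^sub>0] by simp
  qed
qed

lemma svrg_output_descent:
  fixes f h :: "'a::real_vector \<Rightarrow> real"
  assumes "1 \<le> B" "1 \<le> b" "b \<le> n"
    and step: "\<And>x. (\<integral>y. f y \<partial>svrg_step n G lam eta b (gradB G I x\<^sub>0) x\<^sub>0 x) \<le> f x - h x"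
    and int_f: "integrable (svrg_output n G lam eta B b x\<^sub>0 I) f"
    and int_h: "integrable (svrg_output n G lam eta B b x\<^sub>0 I) h"
  shows "real B * (\<integral>x. h x \<partial>svrg_output n G lam eta B b x\<^sub>0 I)
    \<le> real b * (f x\<^sub>0 - (\<integral>x. f x \<partial>svrg_output n G lam eta B b x\<^sub>0 I))"
proof -
  define p where "p = real b / (real B + real b)"
  define Q where "Q = (\<lambda>N. svrg_inner n G lam eta b (gradB G I x\<^sub>0) x\<^sub>0 N x\<^sub>0)"
  define a where "a = (\<lambda>N. \<integral>x. f x \<partial>Q N)"
  define c where "c = (\<lambda>N. \<integral>x. h x \<partial>Q N)"
  have output_eq: "svrg_output n G lam eta B b x\<^sub>0 I = bind_pmf (geometric_pmf p) Q"
    by (simp add: svrg_output_def p_def Q_def)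
  note f = integral_bind_pmf_integrable[OF int_f[unfolded output_eq], folded a_def]
    and h = integral_bind_pmf_integrable[OF int_h[unfolded output_eq], folded c_def]
  have "0 < real B + real b" using assms(1) by simp
  have "a (Suc k) \<le> a k - c k" for k
    unfolding a_def c_def Q_def by (rule svrg_inner_integral_decrease[OF assms(3) step])
  moreover have "0 < p" "p < 1"
    using assms(1,2) by (auto simp: p_def)
  ultimately have "(1 - p) * (\<integral>N. c N \<partial>geometric_pmf p) \<le> p * (a 0 - (\<integral>N. a N \<partial>geometric_pmf p))"
    using geometric_pmf_telescoping f(2) h(2) by blast
  then have "(real B + real b) * ((1 - p) * (\<integral>N. c N \<partial>geometric_pmf p))
      \<le> (real B + real b) * (p * (a 0 - (\<integral>N. a N \<partial>geometric_pmf p)))"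
    using \<open>0 < real B + real b\<close> by (intro mult_left_mono) auto
  moreover have "(real B + real b) * (1 - p) = real B" "(real B + real b) * p = real b"
    using \<open>0 < real B + real b\<close> by (simp_all add: p_def field_simps)
  moreover have "a 0 = f x\<^sub>0"
    by (simp add: a_def Q_def return_pmf.rep_eq integral_return)
  ultimately show ?thesis
    unfolding output_eq f(3) h(3) by (simp only: mult.assoc[symmetric])
qed

lemma svrg_joint_descent:
  fixes f :: "'a::real_vector \<Rightarrow> real" and h :: "'a \<Rightarrow> nat set \<Rightarrow> 'a \<Rightarrow> real"
  assumes "1 \<le> B" "1 \<le> b" "b \<le> n"
    and step: "\<And>x\<^sub>0 I x. (\<integral>y. f y \<partial>svrg_step n G lam eta b (gradB G I x\<^sub>0) x\<^sub>0 x) \<le> f x - h x\<^sub>0 I x"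
    and int_start: "integrable (svrg_joint n G lam eta B b P0) (\<lambda>(x\<^sub>0, I, x). f x\<^sub>0)"
    and int_end: "integrable (svrg_joint n G lam eta B b P0) (\<lambda>(x\<^sub>0, I, x). f x)"
    and int_h: "integrable (svrg_joint n G lam eta B b P0) (\<lambda>(x\<^sub>0, I, x). h x\<^sub>0 I x)"
  shows "real B * (\<integral>(x\<^sub>0, I, x). h x\<^sub>0 I x \<partial>svrg_joint n G lam eta B b P0)
    \<le> real b * (\<integral>(x\<^sub>0, I, x). f x\<^sub>0 - f x \<partial>svrg_joint n G lam eta B b P0)"
proof -
  let ?P = "svrg_joint n G lam eta B b P0"
  define H where "H = (\<lambda>(x\<^sub>0::'a, I::nat set, x). h x\<^sub>0 I x)"
  define gap where "gap = (\<lambda>(x\<^sub>0::'a, I::nat set, x::'a). f x\<^sub>0 - f x)"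
  define \<psi> where "\<psi> y = real B * H y - real b * gap y" for y
  have "gap = (\<lambda>y. (\<lambda>(x\<^sub>0, I, x). f x\<^sub>0) y - (\<lambda>(x\<^sub>0, I, x). f x) y)"
    by (auto simp: gap_def fun_eq_iff)
  then have int_gap: "integrable ?P gap"
    using Bochner_Integration.integrable_diff[OF int_start int_end] by simp
  have int_\<psi>: "integrable ?P \<psi>"
    unfolding \<psi>_def H_def using int_h int_gap by simp
  have "(\<integral>y. \<psi> y \<partial>?P) \<le> 0"
  proof (rule svrg_joint_integral_nonpos[OF int_\<psi>])
    fix x\<^sub>0 I assume x\<^sub>0: "x\<^sub>0 \<in> set_pmf P0" and I: "I \<in> set_pmf (pmf_of_set (subsets_of_size n B))"
    have "integrable (svrg_output n G lam eta B b x\<^sub>0 I) f" "integrable (svrg_output n G lam eta B b x\<^sub>0 I) (h x\<^sub>0 I)"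
      using integrable_svrg_output[OF int_end x\<^sub>0 I] integrable_svrg_output[OF int_h x\<^sub>0 I] by simp_all
    then show "(\<integral>x. \<psi> (x\<^sub>0, I, x) \<partial>svrg_output n G lam eta B b x\<^sub>0 I) \<le> 0"
      using svrg_output_descent[OF assms(1-3) step] by (simp add: \<psi>_def H_def gap_def)
  qed
  moreover have "(\<integral>y. \<psi> y \<partial>?P) = real B * (\<integral>y. H y \<partial>?P) - real b * (\<integral>y. gap y \<partial>?P)"
    unfolding \<psi>_def using int_h int_gap by (simp add: H_def)
  ultimately show ?thesis
    unfolding H_def gap_def by simp
qed

theorem lemmaB8:
  fixes n B b :: nat
    and F :: "nat \<Rightarrow> 'a::euclidean_space \<Rightarrow> real"
    and G :: "nat \<Rightarrow> 'a \<Rightarrow> 'a"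
    and L lam eta :: real
    and P0 :: "'a pmf"
  defines "f \<equiv> (\<lambda>x. (1 / real n) * (\<Sum>i=1..n. F i x))"
    and "gradf \<equiv> gradB G {1..n}"
    and "P \<equiv> measure_pmf (svrg_joint n G lam eta B b P0)"
    and "e \<equiv> (\<lambda>x0 I. lam *\<^sub>R gradB G I x0 - (1 - lam) *\<^sub>R gradB G {1..n} x0)"
  assumes n: "1 \<le> n"
    and B: "1 \<le> B" "B \<le> n"
    and b: "1 \<le> b" "b \<le> n"
    and grad: "\<And>i x. i \<in> {1..n} \<Longrightarrow> (F i has_derivative (\<lambda>h. G i x \<bullet> h)) (at x)"
    and smooth: "\<And>i x y. i \<in> {1..n} \<Longrightarrow> norm (G i x - G i y) \<le> L * norm (x - y)"
    and lam: "0 < lam" "lam < 1"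
    and eta: "0 < eta" "eta * L < 1"
    and int1: "integrable P (\<lambda>(x0, I, x). f x0)"
    and int2: "integrable P (\<lambda>(x0, I, x). f x)"
    and int3: "integrable P (\<lambda>(x0, I, x). (norm (gradf x))\<^sup>2)"
    and int4: "integrable P (\<lambda>(x0, I, x). e x0 I \<bullet> gradf x)"
    and int5: "integrable P (\<lambda>(x0, I, x). (norm (x - x0))\<^sup>2)"
    and int6: "integrable P (\<lambda>(x0, I, x). (norm (e x0 I))\<^sup>2)"
  shows "(1 - lam) * (1 - (1 - lam) * L * eta) * eta * real B
           * (\<integral>(x0, I, x). (norm (gradf x))\<^sup>2 \<partial>P)
         + eta * real B * (\<integral>(x0, I, x). e x0 I \<bullet> gradf x \<partial>P)
         \<le> real b * (\<integral>(x0, I, x). f x0 - f x \<partial>P)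
           + (1 - lam)\<^sup>2 * eta\<^sup>2 * real B * L ^ 3 / (2 * real b)
             * (\<integral>(x0, I, x). (norm (x - x0))\<^sup>2 \<partial>P)
           + L * eta\<^sup>2 * real B * (\<integral>(x0, I, x). (norm (e x0 I))\<^sup>2 \<partial>P)"
proof -
  have "0 \<le> L"
    using lipschitz_constant_nonneg[of "G 1" L] smooth n by simp
  define h where "h x0 I x = eta * (1 - lam) * (1 - (1 - lam) * L * eta) * (norm (gradf x))\<^sup>2
    + eta * (e x0 I \<bullet> gradf x) - L * eta\<^sup>2 * (norm (e x0 I))\<^sup>2
    - (1 - lam)\<^sup>2 * eta\<^sup>2 * L ^ 3 / (2 * real b) * (norm (x - x0))\<^sup>2" for x0 I x
  have step: "(\<integral>y. f y \<partial>svrg_step n G lam eta b (gradB G I x0) x0 x) \<le> f x - h x0 I x" for x0 I x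
    unfolding h_def e_def gradf_def f_def
    by (rule svrg_step_descent[OF b smooth average_quadratic_upper_bound[OF n grad smooth] \<open>0 \<le> L\<close>])
  \<comment> \<open>Opaque names keep simp from merging the case-splitting integrands before linearity is used.\<close>
  define K3 where "K3 = (\<lambda>(x0::'a, I::nat set, x). (norm (gradf x))\<^sup>2)"
  define K4 where "K4 = (\<lambda>(x0, I, x::'a). e x0 I \<bullet> gradf x)"
  define K5 where "K5 = (\<lambda>(x0, I::nat set, x::'a). (norm (x - x0))\<^sup>2)"
  define K6 where "K6 = (\<lambda>(x0, I, x::'a). (norm (e x0 I))\<^sup>2)"
  have h_split: "(\<lambda>(x0, I, x). h x0 I x) = (\<lambda>y. eta * (1 - lam) * (1 - (1 - lam) * L * eta) * K3 y
      + eta * K4 y - L * eta\<^sup>2 * K6 y - (1 - lam)\<^sup>2 * eta\<^sup>2 * L ^ 3 / (2 * real b) * K5 y)"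
    by (auto simp: fun_eq_iff h_def K3_def K4_def K5_def K6_def)
  note integrable = int3[folded K3_def] int4[folded K4_def] int5[folded K5_def] int6[folded K6_def]
  then have "integrable P (\<lambda>(x0, I, x). h x0 I x)"
    unfolding h_split by (intro Bochner_Integration.integrable_diff Bochner_Integration.integrable_add
        integrable_mult_right)
  then have "real B * (\<integral>(x0, I, x). h x0 I x \<partial>P) \<le> real b * (\<integral>(x0, I, x). f x0 - f x \<partial>P)"
    using svrg_joint_descent[OF B(1) b step] int1 int2 unfolding P_def by blast
  then show ?thesis
    unfolding h_split using integrable b
    by (simp add: K3_def K4_def K5_def K6_def algebra_simps)
qed

end
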